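(* Let $n\geq 6$ and $a\geq 2$ be integers with $n\equiv a \pmod 2$, and let $k=\frac{n-a-2}{2}\geq 1$. Let $K_{2,a}\bullet F_k$ be the graph obtained by identifying a vertex of $K_{2,a}$ belonging to the part of size $a$ with the vertex of $F_k$ that is adjacent to every other vertex of $F_k$, and let $K_{2,a}* F_k$ be the graph obtained by identifying a vertex of $K_{2,a}$ belonging to the part of size $2$ with the vertex of $F_k$ that is adjacent to every other vertex of $F_k$. Then $$\rho(K_{2,a}\bullet F_{k})< \sqrt{2n-4}\quad\text{and}\quad \rho(K_{2,a} * F_{k})< \sqrt{2n-4}.$$
   Context: All graphs are simple and undirected. $K_{2,a}$ is the complete bipartite graph with parts of sizes $2$ and $a$. The friendship graph $F_k$ is the graph consisting of $k$ edge-disjoint triangles that all share a single common vertex (the vertex adjacent to all others). $\rho(G)$ denotes the spectral radius (largest adjacency eigenvalue) of $G$. *)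

theory Defs
  imports Complex_Main "Jordan_Normal_Form.Char_Poly"
begin

text \<open>Simple graphs on the vertex set {0..<N} given by a symmetric irreflexive
  edge predicate on nat.\<close>

definition adj_matrix :: "nat \<Rightarrow> (nat \<Rightarrow> nat \<Rightarrow> bool) \<Rightarrow> real mat" where
  "adj_matrix N E = mat N N (\<lambda>(i,j). if E i j then 1 else 0)"

definition graph_rho :: "nat \<Rightarrow> (nat \<Rightarrow> nat \<Rightarrow> bool) \<Rightarrow> real" where
  "graph_rho N E = Max {x. eigenvalue (adj_matrix N E) x}"

text \<open>K_{2,a}: part of size 2 is {0,1}, part of size a is {2..<a+2}.\<close>
definition K2a_edge :: "nat \<Rightarrow> nat \<Rightarrow> nat \<Rightarrow> bool" where
  "K2a_edge a u v \<longleftrightarrow>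
     (u < 2 \<and> 2 \<le> v \<and> v < a + 2) \<or> (v < 2 \<and> 2 \<le> u \<and> u < a + 2)"

text \<open>Friendship graph F_k with center c and the 2k non-center vertices
  {a+2..<a+2+2k}; the triangles are {c, a+2+2i, a+3+2i} for i < k.\<close>
definition Fk_edge :: "nat \<Rightarrow> nat \<Rightarrow> nat \<Rightarrow> nat \<Rightarrow> nat \<Rightarrow> bool" where
  "Fk_edge c a k u v \<longleftrightarrow>
     (let R = {a+2..<a+2+2*k} in
       (u \<in> R \<and> v \<in> R \<and> u \<noteq> v \<and> (u - (a+2)) div 2 = (v - (a+2)) div 2)
       \<or> (u = c \<and> v \<in> R) \<or> (v = c \<and> u \<in> R))"

text \<open>K_{2,a} \<bullet> F_k: center of F_k identified with vertex 2 (part of size a).\<close>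
definition bullet_edge :: "nat \<Rightarrow> nat \<Rightarrow> nat \<Rightarrow> nat \<Rightarrow> bool" where
  "bullet_edge a k u v \<longleftrightarrow> K2a_edge a u v \<or> Fk_edge 2 a k u v"

text \<open>K_{2,a} * F_k: center of F_k identified with vertex 0 (part of size 2).\<close>
definition star_edge :: "nat \<Rightarrow> nat \<Rightarrow> nat \<Rightarrow> nat \<Rightarrow> bool" where
  "star_edge a k u v \<longleftrightarrow> K2a_edge a u v \<or> Fk_edge 0 a k u v"

end

theory Submission
  imports Defs
begin

(* If w is a positive vector and the adjacency matrix A satisfies A s < C w for some s \<ge> A w
   (entrywise), then every real eigenvalue x has x^2 < C: compare an eigenvector v with w at a
   vertex where |v|/w is maximal. For both graphs a suitable w is constant on the cells of an
   equitable partition (the vertices of K_{2,a} split by their part and by being the glued vertex,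
   and the triangle vertices), so A w and A s are computed cell by cell. The spectral radius is a
   maximum over a nonempty set because two vertices u, v of one triangle are adjacent twins, which
   makes e_u - e_v an eigenvector for -1. *)

definition neighbours :: "nat \<Rightarrow> (nat \<Rightarrow> nat \<Rightarrow> bool) \<Rightarrow> nat \<Rightarrow> nat set" where
  "neighbours N E i = {j. j < N \<and> E i j}"

lemma finite_neighbours [simp]: "finite (neighbours N E i)"
  by (simp add: neighbours_def)

lemma adj_matrix_carrier [simp]: "adj_matrix N E \<in> carrier_mat N N"
  by (simp add: adj_matrix_def)

lemma adj_matrix_mult_vec_nth:
  assumes "v \<in> carrier_vec N" "i < N"
  shows "(adj_matrix N E *\<^sub>v v) $ i = (\<Sum>j\<in>neighbours N E i. v $ j)"
proof -
  have "(adj_matrix N E *\<^sub>v v) $ i = (\<Sum>j<N. (if E i j then 1 else 0) * v $ j)"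
    using assms by (simp add: adj_matrix_def scalar_prod_def lessThan_atLeast0)
  also have "\<dots> = (\<Sum>j\<in>neighbours N E i. v $ j)"
    unfolding neighbours_def by (rule sum.mono_neutral_cong_right) auto
  finally show ?thesis .
qed

lemma eigenvector_adj_matrix_nth:
  assumes "v \<in> carrier_vec N" "adj_matrix N E *\<^sub>v v = x \<cdot>\<^sub>v v" "i < N"
  shows "x * v $ i = (\<Sum>j\<in>neighbours N E i. v $ j)"
proof -
  have "(x \<cdot>\<^sub>v v) $ i = x * v $ i" using assms(1,3) by simp
  then show ?thesis using adj_matrix_mult_vec_nth[OF assms(1,3), of E] assms(2) by simp
qed

lemma eigenvalue_adj_matrixI:
  fixes f :: "nat \<Rightarrow> real"
  assumes "\<And>i. i < N \<Longrightarrow> (\<Sum>j\<in>neighbours N E i. f j) = x * f i" and "r < N" "f r \<noteq> 0"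
  shows "eigenvalue (adj_matrix N E) x"
proof -
  let ?v = "vec N f"
  have "?v \<noteq> 0\<^sub>v N" using assms(2,3) by (metis index_vec index_zero_vec(1))
  moreover have "adj_matrix N E *\<^sub>v ?v = x \<cdot>\<^sub>v ?v"
  proof (rule eq_vecI)
    fix i assume "i < dim_vec (x \<cdot>\<^sub>v ?v)"
    then have i: "i < N" by simp
    have "(adj_matrix N E *\<^sub>v ?v) $ i = (\<Sum>j\<in>neighbours N E i. f j)"
      by (simp add: adj_matrix_mult_vec_nth[OF _ i] neighbours_def)
    then show "(adj_matrix N E *\<^sub>v ?v) $ i = (x \<cdot>\<^sub>v ?v) $ i" using assms(1) i by simp
  qed (simp add: adj_matrix_def)
  ultimately show ?thesis
    unfolding eigenvalue_def eigenvector_def by (intro exI[of _ ?v]) (simp add: adj_matrix_def)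
qed

lemma adjacent_twins_eigenvalue_minus_one:
  assumes "symp E" "irreflp E" "E u v" "u < N" "v < N"
    and twins: "\<And>w. w \<noteq> u \<Longrightarrow> w \<noteq> v \<Longrightarrow> E u w \<longleftrightarrow> E v w"
  shows "eigenvalue (adj_matrix N E) (-1)"
proof -
  define f :: "nat \<Rightarrow> real" where "f j = (if j = u then 1 else if j = v then -1 else 0)" for j
  have loopless: "\<not> E w w" for w using assms(2) by (simp add: irreflp_def)
  have "E v u" using assms(1,3) by (rule sympD)
  have "u \<noteq> v" using assms(3) loopless by blast
  have row_sum: "(\<Sum>j\<in>neighbours N E i. f j) = - f i" for i
  proof -
    have "(\<Sum>j\<in>neighbours N E i. f j) = (\<Sum>j\<in>neighbours N E i \<inter> {u, v}. f j)"
      by (rule sum.mono_neutral_right) (auto simp: f_def)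
    also have "\<dots> = - f i"
    proof -
      consider "i = u" | "i = v" | "i \<noteq> u" "i \<noteq> v" by blast
      then show ?thesis
      proof cases
        case 1
        then have "neighbours N E i \<inter> {u, v} = {v}"
          using assms(3,5) loopless by (auto simp: neighbours_def)
        then show ?thesis using 1 \<open>u \<noteq> v\<close> by (simp add: f_def)
      next
        case 2
        then have "neighbours N E i \<inter> {u, v} = {u}"
          using \<open>E v u\<close> assms(4) loopless by (auto simp: neighbours_def)
        then show ?thesis using 2 \<open>u \<noteq> v\<close> by (simp add: f_def)
      next
        case 3
        then have "E i u \<longleftrightarrow> E i v" using twins[of i] assms(1) by (simp add: symp_def) blast
        then have "neighbours N E i \<inter> {u, v} = {} \<or> neighbours N E i \<inter> {u, v} = {u, v}"
          using assms(4,5) by (auto simp: neighbours_def)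
        then show ?thesis using 3 \<open>u \<noteq> v\<close> by (elim disjE) (simp_all add: f_def)
      qed
    qed
    finally show ?thesis .
  qed
  show ?thesis
  proof (rule eigenvalue_adj_matrixI[where f = f and r = u])
    show "(\<Sum>j\<in>neighbours N E i. f j) = - 1 * f i" for i using row_sum by simp
  qed (use assms(4) in \<open>simp_all add: f_def\<close>)
qed

lemma eigenvalue_adj_matrix_square_less:
  fixes w s :: "nat \<Rightarrow> real"
  assumes w_pos: "\<And>i. i < N \<Longrightarrow> w i > 0"
    and w_le_s: "\<And>i. i < N \<Longrightarrow> (\<Sum>j\<in>neighbours N E i. w j) \<le> s i"
    and s_less_w: "\<And>i. i < N \<Longrightarrow> (\<Sum>j\<in>neighbours N E i. s j) < C * w i"
    and "eigenvalue (adj_matrix N E) x"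
  shows "x\<^sup>2 < C"
proof -
  obtain v where v: "v \<in> carrier_vec N" "v \<noteq> 0\<^sub>v N" "adj_matrix N E *\<^sub>v v = x \<cdot>\<^sub>v v"
    using assms(4) unfolding eigenvalue_def eigenvector_def by (auto simp: adj_matrix_def)
  obtain j0 where j0: "j0 < N" "v $ j0 \<noteq> 0"
    using v(1,2) by (metis carrier_vecD eq_vecI index_zero_vec(1,2))
  define ratio where "ratio i = \<bar>v $ i\<bar> / w i" for i
  have "Max (ratio ` {..<N}) \<in> ratio ` {..<N}" using j0 by (intro Max_in) auto
  then obtain i0 where i0: "i0 < N" "ratio i0 = Max (ratio ` {..<N})" by auto
  have ratio_max: "ratio j \<le> ratio i0" if "j < N" for j
    using that by (simp add: i0(2))
  define M where "M = ratio i0"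
  have v_le: "\<bar>v $ j\<bar> \<le> M * w j" if "j < N" for j
    using ratio_max[OF that] w_pos[OF that] by (simp add: M_def ratio_def divide_le_eq)
  have "0 < ratio j0" using j0 w_pos by (simp add: ratio_def)
  then have "M > 0" using ratio_max[OF j0(1)] by (simp add: M_def)
  have v_i0: "\<bar>v $ i0\<bar> = M * w i0" using w_pos[OF i0(1)] by (simp add: M_def ratio_def)
  have xv_le: "\<bar>x * v $ j\<bar> \<le> M * s j" if "j < N" for j
  proof -
    have "\<bar>x * v $ j\<bar> \<le> (\<Sum>l\<in>neighbours N E j. \<bar>v $ l\<bar>)"
      unfolding eigenvector_adj_matrix_nth[OF v(1,3) that] by (rule sum_abs)
    also have "\<dots> \<le> (\<Sum>l\<in>neighbours N E j. M * w l)"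
      by (rule sum_mono) (simp add: v_le neighbours_def)
    also have "\<dots> \<le> M * s j"
      using w_le_s[OF that] \<open>M > 0\<close> by (simp add: sum_distrib_left[symmetric])
    finally show ?thesis .
  qed
  have "x\<^sup>2 * \<bar>v $ i0\<bar> = \<bar>x * (x * v $ i0)\<bar>"
    by (simp add: power2_eq_square abs_mult abs_mult_self_eq)
  also have "\<dots> = \<bar>\<Sum>j\<in>neighbours N E i0. x * v $ j\<bar>"
    by (simp add: eigenvector_adj_matrix_nth[OF v(1,3) i0(1)] sum_distrib_left)
  also have "\<dots> \<le> (\<Sum>j\<in>neighbours N E i0. \<bar>x * v $ j\<bar>)" by (rule sum_abs)
  also have "\<dots> \<le> (\<Sum>j\<in>neighbours N E i0. M * s j)"
    by (rule sum_mono) (simp add: xv_le neighbours_def)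
  also have "\<dots> < M * (C * w i0)"
    using s_less_w[OF i0(1)] \<open>M > 0\<close> by (simp add: sum_distrib_left[symmetric])
  also have "\<dots> = C * \<bar>v $ i0\<bar>" using v_i0 by simp
  finally show ?thesis using \<open>M > 0\<close> v_i0 w_pos[OF i0(1)] by simp
qed

lemma graph_rho_less_sqrt:
  assumes "eigenvalue (adj_matrix N E) y"
    and "\<And>x. eigenvalue (adj_matrix N E) x \<Longrightarrow> x\<^sup>2 < C"
  shows "graph_rho N E < sqrt C"
proof -
  let ?S = "{x. eigenvalue (adj_matrix N E) x}"
  have "?S = {x. poly (char_poly (adj_matrix N E)) x = 0}"
    using eigenvalue_root_char_poly[OF adj_matrix_carrier] by blast
  moreover have "char_poly (adj_matrix N E) \<noteq> 0"
    using degree_monic_char_poly[OF adj_matrix_carrier, of N E] by auto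
  ultimately have "finite ?S" by (simp add: poly_roots_finite)
  then have "graph_rho N E \<in> ?S" unfolding graph_rho_def using assms(1) by (intro Max_in) auto
  then show ?thesis using assms(2) by (simp add: real_less_rsqrt)
qed

definition K2a_Fk_edge :: "nat \<Rightarrow> nat \<Rightarrow> nat \<Rightarrow> nat \<Rightarrow> nat \<Rightarrow> bool" where
  "K2a_Fk_edge c a k u v \<longleftrightarrow> K2a_edge a u v \<or> Fk_edge c a k u v"

lemma bullet_edge_eq: "bullet_edge a k = K2a_Fk_edge 2 a k"
  by (simp add: fun_eq_iff bullet_edge_def K2a_Fk_edge_def)

lemma star_edge_eq: "star_edge a k = K2a_Fk_edge 0 a k"
  by (simp add: fun_eq_iff star_edge_def K2a_Fk_edge_def)

lemma symp_K2a_Fk_edge: "symp (K2a_Fk_edge c a k)"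
  by (auto simp: symp_def K2a_Fk_edge_def K2a_edge_def Fk_edge_def)

lemma irreflp_K2a_Fk_edge: "c < a + 2 \<Longrightarrow> irreflp (K2a_Fk_edge c a k)"
  by (auto simp: irreflp_def K2a_Fk_edge_def K2a_edge_def Fk_edge_def)

lemma K2a_Fk_edge_triangle_twins:
  assumes "c < a + 2" "w \<noteq> a + 2" "w \<noteq> a + 3"
  shows "K2a_Fk_edge c a k (a + 2) w \<longleftrightarrow> K2a_Fk_edge c a k (a + 3) w"
proof -
  have "(w - (a + 2)) div 2 \<noteq> 0" if "a + 2 \<le> w" using that assms(2,3) by linarith
  then show ?thesis using assms(1) by (auto simp: K2a_Fk_edge_def K2a_edge_def Fk_edge_def)
qed

lemma eigenvalue_minus_one_K2a_Fk:
  assumes "c < a + 2" "k \<ge> 1"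
  shows "eigenvalue (adj_matrix (a + 2 + 2 * k) (K2a_Fk_edge c a k)) (-1)"
proof (rule adjacent_twins_eigenvalue_minus_one[where u = "a + 2" and v = "a + 3"])
  show "K2a_Fk_edge c a k (a + 2) (a + 3)"
    using assms by (simp add: K2a_Fk_edge_def Fk_edge_def)
  show "K2a_Fk_edge c a k (a + 2) w \<longleftrightarrow> K2a_Fk_edge c a k (a + 3) w"
    if "w \<noteq> a + 2" "w \<noteq> a + 3" for w
    using assms(1) that by (rule K2a_Fk_edge_triangle_twins)
qed (use assms in \<open>simp_all add: symp_K2a_Fk_edge irreflp_K2a_Fk_edge\<close>)

lemma neighbours_K2a_Fk_triangle:
  assumes "c < a + 2" "a + 2 \<le> u" "u < a + 2 + 2 * k"
  obtains m where "a + 2 \<le> m" "neighbours (a + 2 + 2 * k) (K2a_Fk_edge c a k) u = {c, m}"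
proof -
  obtain r where r: "u = a + 2 + r" "r < 2 * k"
    using assms(2,3) by (metis add_less_cancel_left le_Suc_ex)
  define m where "m = (if even r then u + 1 else u - 1)"
  have "a + 2 \<le> m" using r by (auto simp: m_def dest: odd_pos)
  have "neighbours (a + 2 + 2 * k) (K2a_Fk_edge c a k) u = insert c
      {v. a + 2 \<le> v \<and> v < a + 2 + 2 * k \<and> v \<noteq> u \<and> (v - (a + 2)) div 2 = r div 2}"
    using assms r by (auto simp: neighbours_def K2a_Fk_edge_def K2a_edge_def Fk_edge_def)
  also have "{v. a + 2 \<le> v \<and> v < a + 2 + 2 * k \<and> v \<noteq> u \<and> (v - (a + 2)) div 2 = r div 2} = {m}"
    using r unfolding m_def by (auto simp: le_iff_add; presburger)
  finally show thesis using \<open>a + 2 \<le> m\<close> that by blast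
qed

definition bullet_class_fun :: "nat \<Rightarrow> real \<Rightarrow> real \<Rightarrow> real \<Rightarrow> real \<Rightarrow> nat \<Rightarrow> real" where
  "bullet_class_fun a p q r t i = (if i < 2 then p else if i = 2 then q else if i < a + 2 then r else t)"

definition star_class_fun :: "nat \<Rightarrow> real \<Rightarrow> real \<Rightarrow> real \<Rightarrow> real \<Rightarrow> nat \<Rightarrow> real" where
  "star_class_fun a p q r t i = (if i = 0 then p else if i = 1 then q else if i < a + 2 then r else t)"

lemma bullet_neighbour_sum:
  assumes "a \<ge> 1" "i < a + 2 + 2 * k"
  shows "(\<Sum>j\<in>neighbours (a + 2 + 2 * k) (bullet_edge a k) i. bullet_class_fun a p q r t j)
    = bullet_class_fun a (q + (real a - 1) * r) (2 * p + 2 * real k * t) (2 * p) (q + t) i"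
proof -
  let ?f = "bullet_class_fun a p q r t" and ?nb = "neighbours (a + 2 + 2 * k) (bullet_edge a k) i"
  consider "i < 2" | "i = 2" | "3 \<le> i" "i < a + 2" | "a + 2 \<le> i" by linarith
  then show ?thesis
  proof cases
    case 1
    then have "?nb = insert 2 {3..<a + 2}"
      using assms(1) by (auto simp: neighbours_def bullet_edge_def K2a_edge_def Fk_edge_def)
    moreover have "(\<Sum>j\<in>{3..<a + 2}. ?f j) = (\<Sum>j\<in>{3..<a + 2}. r)"
      by (rule sum.cong) (simp_all add: bullet_class_fun_def)
    ultimately show ?thesis using 1 assms(1) by (simp add: bullet_class_fun_def of_nat_diff)
  next
    case 2
    then have "?nb = {0, 1} \<union> {a + 2..<a + 2 + 2 * k}"
      using assms(1) by (auto simp: neighbours_def bullet_edge_def K2a_edge_def Fk_edge_def)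
    moreover have "(\<Sum>j\<in>{a + 2..<a + 2 + 2 * k}. ?f j) = (\<Sum>j\<in>{a + 2..<a + 2 + 2 * k}. t)"
      by (rule sum.cong) (use assms(1) in \<open>simp_all add: bullet_class_fun_def\<close>)
    ultimately show ?thesis using 2 by (simp add: sum.union_disjoint bullet_class_fun_def)
  next
    case 3
    then have "?nb = {0, 1}"
      by (auto simp: neighbours_def bullet_edge_def K2a_edge_def Fk_edge_def)
    then show ?thesis using 3 by (simp add: bullet_class_fun_def)
  next
    case 4
    obtain m where "a + 2 \<le> m" "?nb = {2, m}"
      using neighbours_K2a_Fk_triangle[of 2 a i k] 4 assms by (auto simp: bullet_edge_eq)
    then show ?thesis using 4 assms(1) by (simp add: bullet_class_fun_def)
  qed
qed

lemma star_neighbour_sum: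
  assumes "i < a + 2 + 2 * k"
  shows "(\<Sum>j\<in>neighbours (a + 2 + 2 * k) (star_edge a k) i. star_class_fun a p q r t j)
    = star_class_fun a (real a * r + 2 * real k * t) (real a * r) (p + q) (p + t) i"
proof -
  let ?f = "star_class_fun a p q r t" and ?nb = "neighbours (a + 2 + 2 * k) (star_edge a k) i"
  have sum_r: "(\<Sum>j\<in>{2..<a + 2}. ?f j) = real a * r"
    by (subst sum.cong[where B = "{2..<a + 2}" and h = "\<lambda>_. r"]) (simp_all add: star_class_fun_def)
  have sum_t: "(\<Sum>j\<in>{a + 2..<a + 2 + 2 * k}. ?f j) = 2 * real k * t"
    by (subst sum.cong[where B = "{a + 2..<a + 2 + 2 * k}" and h = "\<lambda>_. t"])
      (simp_all add: star_class_fun_def)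
  consider "i = 0" | "i = 1" | "2 \<le> i" "i < a + 2" | "a + 2 \<le> i" by linarith
  then show ?thesis
  proof cases
    case 1
    then have "?nb = {2..<a + 2} \<union> {a + 2..<a + 2 + 2 * k}"
      by (auto simp: neighbours_def star_edge_def K2a_edge_def Fk_edge_def)
    then show ?thesis using 1 sum_r sum_t by (simp add: sum.union_disjoint star_class_fun_def)
  next
    case 2
    then have "?nb = {2..<a + 2}"
      by (auto simp: neighbours_def star_edge_def K2a_edge_def Fk_edge_def)
    then show ?thesis using 2 sum_r by (simp add: star_class_fun_def)
  next
    case 3
    then have "?nb = {0, 1}"
      by (auto simp: neighbours_def star_edge_def K2a_edge_def Fk_edge_def)
    then show ?thesis using 3 by (simp add: star_class_fun_def)
  next
    case 4
    obtain m where "a + 2 \<le> m" "?nb = {0, m}"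
      using neighbours_K2a_Fk_triangle[of 0 a i k] 4 assms by (auto simp: star_edge_eq)
    then show ?thesis using 4 by (simp add: star_class_fun_def)
  qed
qed

lemma graph_rho_bullet_less:
  assumes "a \<ge> 2" "k \<ge> 1"
  shows "graph_rho (a + 2 + 2 * k) (bullet_edge a k) < sqrt (2 * real a + 4 * real k)"
proof (rule graph_rho_less_sqrt)
  show "eigenvalue (adj_matrix (a + 2 + 2 * k) (bullet_edge a k)) (-1)"
    unfolding bullet_edge_eq using assms by (intro eigenvalue_minus_one_K2a_Fk) auto
  have a: "a \<ge> 1" using assms(1) by simp
  let ?w = "bullet_class_fun a 2 3 2 2" and ?s = "bullet_class_fun a (2 * real a + 1) (4 + 4 * real k) 4 5"
  fix x
  assume "eigenvalue (adj_matrix (a + 2 + 2 * k) (bullet_edge a k)) x"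
  then show "x\<^sup>2 < 2 * real a + 4 * real k"
  proof (rule eigenvalue_adj_matrix_square_less[where w = ?w and s = ?s, rotated 3])
    fix i assume i: "i < a + 2 + 2 * k"
    show "?w i > 0" by (simp add: bullet_class_fun_def)
    show "(\<Sum>j\<in>neighbours (a + 2 + 2 * k) (bullet_edge a k) i. ?w j) \<le> ?s i"
      unfolding bullet_neighbour_sum[OF a i] using assms by (simp add: bullet_class_fun_def)
    show "(\<Sum>j\<in>neighbours (a + 2 + 2 * k) (bullet_edge a k) i. ?s j) < (2 * real a + 4 * real k) * ?w i"
      unfolding bullet_neighbour_sum[OF a i] using assms by (simp add: bullet_class_fun_def algebra_simps)
  qed
qed

lemma graph_rho_star_less:
  assumes "a \<ge> 2" "k \<ge> 1"
  shows "graph_rho (a + 2 + 2 * k) (star_edge a k) < sqrt (2 * real a + 4 * real k)"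
proof (rule graph_rho_less_sqrt)
  show "eigenvalue (adj_matrix (a + 2 + 2 * k) (star_edge a k)) (-1)"
    unfolding star_edge_eq using assms by (intro eigenvalue_minus_one_K2a_Fk) auto
  let ?w = "star_class_fun a 3 3 2 2" and ?s = "star_class_fun a (2 * real a + 4 * real k) (2 * real a) 6 5"
  fix x
  assume "eigenvalue (adj_matrix (a + 2 + 2 * k) (star_edge a k)) x"
  then show "x\<^sup>2 < 2 * real a + 4 * real k"
  proof (rule eigenvalue_adj_matrix_square_less[where w = ?w and s = ?s, rotated 3])
    fix i assume i: "i < a + 2 + 2 * k"
    show "?w i > 0" by (simp add: star_class_fun_def)
    show "(\<Sum>j\<in>neighbours (a + 2 + 2 * k) (star_edge a k) i. ?w j) \<le> ?s i"
      unfolding star_neighbour_sum[OF i] by (simp add: star_class_fun_def)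
    show "(\<Sum>j\<in>neighbours (a + 2 + 2 * k) (star_edge a k) i. ?s j) < (2 * real a + 4 * real k) * ?w i"
      unfolding star_neighbour_sum[OF i] using assms by (simp add: star_class_fun_def algebra_simps)
  qed
qed

theorem lemma2p6:
  fixes n a k :: nat
  assumes "n \<ge> 6" and "a \<ge> 2" and "n mod 2 = a mod 2"
    and "2 * k = n - a - 2" and "k \<ge> 1"
  shows "graph_rho n (bullet_edge a k) < sqrt (2 * real n - 4)
       \<and> graph_rho n (star_edge a k) < sqrt (2 * real n - 4)"
proof -
  have n: "n = a + 2 + 2 * k" using assms(4,5) by linarith
  then have "2 * real n - 4 = 2 * real a + 4 * real k" by simp
  then show ?thesis
    using graph_rho_bullet_less[OF assms(2,5)] graph_rho_star_less[OF assms(2,5)] n by simp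
qed

end
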